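(* Let $K\ge 2$, $\mathbf{V}\in\mathbb{C}^{n\times r}$, $i\in[n]$, and $\boldsymbol{\phi}^*\in\mathcal{H}_r$. If two distinct hypersurfaces from coordinate group $i$, i.e. $\mathcal{H}_{i,m_1}$ and $\mathcal{H}_{i,m_2}$ with $m_1\ne m_2$ in $\{0,\dots,B_K-1\}$, both contain $\boldsymbol{\phi}^*$, then $\mathbf{V}_{i,:}\mathbf{c}(\boldsymbol{\phi}^* )=0$, and consequently all $B_K$ hypersurfaces $\mathcal{H}_{i,0},\dots,\mathcal{H}_{i,B_K-1}$ contain $\boldsymbol{\phi}^*$.
   Context: $B_K=K/2$ if $K$ is even and $B_K=K$ if $K$ is odd; $\vartheta_m=\pi(2m+1)/K$. $\mathcal{H}_r=(-\pi/2,\pi/2]^{2r-2}\times(-\pi/K,\pi/K]$. For $\boldsymbol{\phi}\in\mathcal{H}_r$, $\tilde{\mathbf{c}}(\boldsymbol{\phi})\in\mathbb{R}^{2r}$ is given by $\tilde c_1=\sin\phi_1$, $\tilde c_k=(\prod_{l<k}\cos\phi_l)\sin\phi_k$ for $2\le k\le 2r-1$, $\tilde c_{2r}=(\prod_{l=1}^{2r-2}\cos\phi_l)\cos\phi_{2r-1}$, and $\mathbf{c}(\boldsymbol{\phi})\in\mathbb{C}^r$ by $c_j=\tilde c_{2j}+\mathrm{i}\tilde c_{2j-1}$. The hypersurface for coordinate $i$ and boundary index $m$ is $\mathcal{H}_{i,m}=\{\boldsymbol{\phi}\in\mathcal{H}_r:\mathrm{Im}(e^{-\mathrm{i}\vartheta_m}\mathbf{V}_{i,:}\mathbf{c}(\boldsymbol{\phi}))=0\}$.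 *)

theory Defs
  imports Complex_Main
begin

text \<open>Indices are 1-based as in the paper. Angles phi are functions nat => real;
 only the coordinates 1..2r-1 matter. V is an n x r complex matrix given as
 V :: nat => nat => complex with rows 1..n and columns 1..r.\<close>

definition B :: "nat \<Rightarrow> nat" where
  "B K = (if even K then K div 2 else K)"

definition theta :: "nat \<Rightarrow> nat \<Rightarrow> real" where
  "theta K m = pi * (2 * real m + 1) / real K"

definition Hr :: "nat \<Rightarrow> nat \<Rightarrow> (nat \<Rightarrow> real) set" where
  "Hr K r = {phi. (\<forall>l\<in>{1..2*r-2}. - pi/2 < phi l \<and> phi l \<le> pi/2)
                 \<and> - pi / real K < phi (2*r-1) \<and> phi (2*r-1) \<le> pi / real K}"

definition ctil :: "nat \<Rightarrow> (nat \<Rightarrow> real) \<Rightarrow> nat \<Rightarrow> real" where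
  "ctil r phi k = (if k = 2*r
      then (\<Prod>l\<in>{1..2*r-2}. cos (phi l)) * cos (phi (2*r-1))
      else (\<Prod>l\<in>{1..<k}. cos (phi l)) * sin (phi k))"

definition cvec :: "nat \<Rightarrow> (nat \<Rightarrow> real) \<Rightarrow> nat \<Rightarrow> complex" where
  "cvec r phi j = Complex (ctil r phi (2*j)) (ctil r phi (2*j-1))"

definition row_prod :: "nat \<Rightarrow> (nat \<Rightarrow> nat \<Rightarrow> complex) \<Rightarrow> nat \<Rightarrow> (nat \<Rightarrow> real) \<Rightarrow> complex" where
  "row_prod r V i phi = (\<Sum>j=1..r. V i j * cvec r phi j)"

definition Hsurf :: "nat \<Rightarrow> nat \<Rightarrow> (nat \<Rightarrow> nat \<Rightarrow> complex) \<Rightarrow> nat \<Rightarrow> nat \<Rightarrow> (nat \<Rightarrow> real) set" where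
  "Hsurf K r V i m = {phi \<in> Hr K r.
      Im (exp (- \<i> * complex_of_real (theta K m)) * row_prod r V i phi) = 0}"

end

theory Submission
  imports Defs
begin

text \<open>Membership of \<open>phi\<close> in \<open>Hsurf K r V i m\<close> says that \<open>z = row_prod r V i phi\<close> lies on
  the real line through \<open>0\<close> spanned by \<open>exp (\<i> * theta K m)\<close>. For distinct \<open>m1, m2 < B K\<close> the
  angle \<open>theta K m1 - theta K m2 = 2 * pi * (m1 - m2) / K\<close> is not a multiple of \<open>pi\<close>, so the two
  lines are distinct and meet only in \<open>0\<close>. Hence \<open>z = 0\<close>, which lies on every such line.\<close>

lemma Im_exp_rotate:
  "Im (exp (- \<i> * complex_of_real t) * z) = Im z * cos t - Re z * sin t"
proof -
  have "exp (- \<i> * complex_of_real t) = Complex (cos t) (- sin t)"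
    by (simp add: exp_eq_polar cis.ctr Complex_eq)
  then show ?thesis by simp
qed

lemma eq_0_if_Im_exp_rotate_eq_0:
  assumes "Im (exp (- \<i> * complex_of_real s) * z) = 0"
    and "Im (exp (- \<i> * complex_of_real t) * z) = 0"
    and "sin (s - t) \<noteq> 0"
  shows "z = 0"
proof -
  have "sin (s - t) * Im z = 0" "sin (s - t) * Re z = 0"
    using assms(1,2) unfolding Im_exp_rotate sin_diff by algebra+
  then show ?thesis
    using assms(3) by (simp add: complex_eq_iff)
qed

lemma eq_if_dvd_double_diff:
  fixes m1 m2 K :: nat
  assumes "m1 < B K" "m2 < B K" and dvd: "int K dvd 2 * (int m1 - int m2)"
  shows "m1 = m2"
proof (rule ccontr)
  assume "m1 \<noteq> m2"
  then have ne: "int m1 - int m2 \<noteq> 0" by simp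
  show False
  proof (cases "even K")
    case True
    then obtain h where K: "K = 2 * h" by blast
    with dvd have "2 * int h dvd 2 * (int m1 - int m2)" by simp
    then have "int h dvd int m1 - int m2"
      by (metis dvd_times_left_cancel_iff zero_neq_numeral)
    then have "\<bar>int h\<bar> \<le> \<bar>int m1 - int m2\<bar>"
      by (rule dvd_imp_le_int[OF ne])
    with assms(1,2) True K show False by (simp add: B_def)
  next
    case False
    then have "coprime (int K) 2"
      by (simp add: coprime_commute)
    with dvd have "int K dvd int m1 - int m2"
      using coprime_dvd_mult_right_iff by blast
    then have "\<bar>int K\<bar> \<le> \<bar>int m1 - int m2\<bar>"
      by (rule dvd_imp_le_int[OF ne])
    with assms(1,2) False show False by (simp add: B_def)
  qed
qed

lemma sin_theta_diff_neq_0: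
  assumes "m1 < B K" "m2 < B K" "m1 \<noteq> m2"
  shows "sin (theta K m1 - theta K m2) \<noteq> 0"
proof
  assume "sin (theta K m1 - theta K m2) = 0"
  then obtain j :: int where j: "theta K m1 - theta K m2 = j * pi"
    by (auto simp: sin_zero_iff_int2)
  have "K > 0"
    using assms(1) by (cases "even K") (auto simp: B_def)
  have "theta K m1 - theta K m2 = pi * (2 * (real m1 - real m2)) / real K"
    unfolding theta_def by (simp add: diff_divide_distrib[symmetric] algebra_simps)
  with j \<open>K > 0\<close> have "pi * (2 * (real m1 - real m2)) = pi * (j * real K)"
    by (simp add: field_simps)
  then have "real_of_int (2 * (int m1 - int m2)) = real_of_int (j * int K)"
    by simp
  then have "int K dvd 2 * (int m1 - int m2)"
    by (simp only: of_int_eq_iff) simp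
  with assms show False
    using eq_if_dvd_double_diff by blast
qed

theorem corollary3:
  fixes K n r i m1 m2 :: nat and V :: "nat \<Rightarrow> nat \<Rightarrow> complex" and phi :: "nat \<Rightarrow> real"
  assumes "K \<ge> 2" and "r \<ge> 1" and "i \<in> {1..n}" and "phi \<in> Hr K r"
    and "m1 < B K" and "m2 < B K" and "m1 \<noteq> m2"
    and "phi \<in> Hsurf K r V i m1" and "phi \<in> Hsurf K r V i m2"
  shows "row_prod r V i phi = 0 \<and> (\<forall>m < B K. phi \<in> Hsurf K r V i m)"
proof -
  have "row_prod r V i phi = 0"
  proof (rule eq_0_if_Im_exp_rotate_eq_0)
    show "Im (exp (- \<i> * complex_of_real (theta K m1)) * row_prod r V i phi) = 0"
      "Im (exp (- \<i> * complex_of_real (theta K m2)) * row_prod r V i phi) = 0"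
      using assms(8,9) by (simp_all add: Hsurf_def)
    show "sin (theta K m1 - theta K m2) \<noteq> 0"
      using assms(5-7) by (rule sin_theta_diff_neq_0)
  qed
  with assms(4) show ?thesis
    by (simp add: Hsurf_def)
qed

end
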